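(* Let $\alpha,\beta,p,n$ be positive integers with $p<\alpha\beta$ and $\beta\mid n$. Let $q=\lceil p/\beta\rceil$ and $r=p \bmod \beta\in\{1,\ldots,\beta\}$. Consider the code on cells $c_1,\ldots,c_n$, starting from the all-zero state, which on the $i$-th write ($i\ge1$) acts as follows: if $1\le i\bmod\alpha<q$, $n$ arbitrary information bits are written into all $n$ cells; if $i\bmod\alpha=q$, $rn/\beta$ arbitrary information bits are written into exactly the cells $c_j$ with $1\le j\bmod\beta\le r$, all other cells being left unchanged; if $i\bmod\alpha>q$, no information is written and no cell changes. Then this code is an $(\alpha,\beta,p)$-constrained code and its rate is $\frac{p}{\alpha\beta}$.
   Context: Convention: for positive integers $x,y$, $x \bmod y$ is taken in $\{1,\ldots,y\}$ (residue $0$ is represented by $y$). Memory cells are binary; there are $n$ cells and cell-state vectors lie in $\{0,1\}^n$. A code on $n$ cells consists, for each write $i\ge 1$, of a real $R_i\ge 0$, an encoder $\mathcal{E}_i:\{1,\ldots,\lfloor 2^{nR_i}\rfloor\}\times\{0,1\}^n\to\{0,1\}^n$ and a decoder $\mathcal{D}_i:\{0,1\}^n\to\{1,\ldots,\lfloor 2^{nR_i}\rfloor\}$ with $\mathcal{D}_i(\mathcal{E}_i(m,\mathbf{u}))=m$ (encoder and decoder may depend on $i$). Starting from $\mathbf{v}_0=\mathbf{0}$, messages $m_1,m_2,\ldots$ produce states $\mathbf{v}_i=\mathcal{E}_i(m_i,\mathbf{v}_{i-1})=(v_{i,1},\ldots,v_{i,n})$. The code is $(\alpha,\beta,p)$-constrained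 if for every message sequence, every $i\ge0$ and every $1\le j\le n-\beta+1$, $|\{(k,\ell): v_{i+k,j+\ell}\ne v_{i+k+1,j+\ell}, 0\le k<\alpha, 0\le\ell<\beta\}|\le p$. Its rate is $\lim_{m\to\infty}\frac1m\sum_{i=1}^m R_i$ (the number of information bits written per cell per write, averaged over writes). *)

theory Defs
  imports Complex_Main
begin

text \<open>Modulo convention of the paper: x mod y taken in {1..y}.\<close>
definition pmod :: "nat \<Rightarrow> nat \<Rightarrow> nat" where
  "pmod x y = (if x mod y = 0 then y else x mod y)"

text \<open>Cell-state vectors in {0,1}^n: cells are indexed 1..n, represented as
  functions nat => bool that are False outside {1..n}.\<close>
definition cellvecs :: "nat \<Rightarrow> (nat \<Rightarrow> bool) set" where
  "cellvecs n = {v. \<forall>j. j \<notin> {1..n} \<longrightarrow> \<not> v j}"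

definition zero_state :: "nat \<Rightarrow> bool" where
  "zero_state = (\<lambda>_. False)"

definition nmsgs :: "nat \<Rightarrow> real \<Rightarrow> nat" where
  "nmsgs n Ri = nat \<lfloor>(2::real) powr (real n * Ri)\<rfloor>"

definition is_code ::
  "nat \<Rightarrow> (nat \<Rightarrow> real) \<Rightarrow> (nat \<Rightarrow> nat \<Rightarrow> (nat \<Rightarrow> bool) \<Rightarrow> (nat \<Rightarrow> bool))
     \<Rightarrow> (nat \<Rightarrow> (nat \<Rightarrow> bool) \<Rightarrow> nat) \<Rightarrow> bool" where
  "is_code n R E D \<longleftrightarrow>
     (\<forall>i\<ge>1. R i \<ge> 0 \<and>
        (\<forall>m \<in> {1..nmsgs n (R i)}. \<forall>u \<in> cellvecs n.
            E i m u \<in> cellvecs n \<and> D i (E i m u) = m) \<and>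
        (\<forall>v \<in> cellvecs n. D i v \<in> {1..nmsgs n (R i)}))"

text \<open>Valid message sequences m_1, m_2, ... (index 0 unused).\<close>
definition valid_msgs :: "nat \<Rightarrow> (nat \<Rightarrow> real) \<Rightarrow> (nat \<Rightarrow> nat) \<Rightarrow> bool" where
  "valid_msgs n R ms \<longleftrightarrow> (\<forall>i\<ge>1. ms i \<in> {1..nmsgs n (R i)})"

fun states :: "(nat \<Rightarrow> nat \<Rightarrow> (nat \<Rightarrow> bool) \<Rightarrow> (nat \<Rightarrow> bool)) \<Rightarrow> (nat \<Rightarrow> nat)
     \<Rightarrow> nat \<Rightarrow> (nat \<Rightarrow> bool)" where
  "states E ms 0 = zero_state"
| "states E ms (Suc i) = E (Suc i) (ms (Suc i)) (states E ms i)"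

definition constrained ::
  "nat \<Rightarrow> nat \<Rightarrow> nat \<Rightarrow> nat \<Rightarrow> (nat \<Rightarrow> real)
     \<Rightarrow> (nat \<Rightarrow> nat \<Rightarrow> (nat \<Rightarrow> bool) \<Rightarrow> (nat \<Rightarrow> bool)) \<Rightarrow> bool" where
  "constrained \<alpha> \<beta> p n R E \<longleftrightarrow>
     (\<forall>ms. valid_msgs n R ms \<longrightarrow>
       (\<forall>i j. 1 \<le> j \<and> j + \<beta> \<le> n + 1 \<longrightarrow>
          card {(k, l). k < \<alpha> \<and> l < \<beta> \<and>
                  states E ms (i + k) (j + l) \<noteq> states E ms (i + k + 1) (j + l)} \<le> p))"

definition has_rate :: "(nat \<Rightarrow> real) \<Rightarrow> real \<Rightarrow> bool" where
  "has_rate R c \<longleftrightarrow> (\<lambda>m. (\<Sum>i=1..m. R i) / real m) \<longlonglongrightarrow> c"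

definition follows_scheme ::
  "nat \<Rightarrow> nat \<Rightarrow> nat \<Rightarrow> nat \<Rightarrow> (nat \<Rightarrow> real)
     \<Rightarrow> (nat \<Rightarrow> nat \<Rightarrow> (nat \<Rightarrow> bool) \<Rightarrow> (nat \<Rightarrow> bool)) \<Rightarrow> bool" where
  "follows_scheme \<alpha> \<beta> p n R E \<longleftrightarrow>
     (let q = nat \<lceil>real p / real \<beta>\<rceil>; r = pmod p \<beta> in
      \<forall>i\<ge>1.
        (pmod i \<alpha> < q \<longrightarrow> R i = 1) \<and>
        (pmod i \<alpha> = q \<longrightarrow> R i = real r / real \<beta> \<and>
           (\<forall>m \<in> {1..nmsgs n (R i)}. \<forall>u \<in> cellvecs n. \<forall>j \<in> {1..n}.
               \<not> (1 \<le> pmod j \<beta> \<and> pmod j \<beta> \<le> r) \<longrightarrow> E i m u j = u j)) \<and>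
        (pmod i \<alpha> > q \<longrightarrow> R i = 0 \<and>
           (\<forall>m \<in> {1..nmsgs n (R i)}. \<forall>u \<in> cellvecs n. E i m u = u)))"

end

theory Submission
  imports Defs "HOL-Number_Theory.Cong"
begin

text \<open>Any \<alpha> consecutive write indices meet every residue 1..\<alpha> exactly once, so every window
  of \<alpha> writes consists of q - 1 full writes, one partial write and \<alpha> - q idle writes.
  On a window of \<beta> consecutive cells a full write changes at most \<beta> cells and the partial
  write at most r, since only r of any \<beta> consecutive cells j have j mod \<beta> \<le> r; this totals
  (q - 1)\<beta> + r = p. The same count shows that the rates of any \<alpha> consecutive writes add up
  to p/\<beta>, which forces the average rate p/(\<alpha>\<beta>). The code itself stores message m as the
  m-th subset of the cells written; \<beta> dividing n makes the partial write use exactly rn/\<beta>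
  cells.\<close>

lemma pmod_in_range: "0 < a \<Longrightarrow> pmod x a \<in> {1..a}"
  unfolding pmod_def by auto

lemma pmod_eq_iff_mod_eq: "0 < a \<Longrightarrow> pmod x a = pmod y a \<longleftrightarrow> x mod a = y mod a"
  by (metis mod_self pmod_def mod_mod_trivial)

lemma pmod_Suc: "0 < a \<Longrightarrow> pmod (Suc x) a = Suc (x mod a)"
  unfolding pmod_def by (simp add: mod_Suc)

lemma pmod_mult_add: "0 < a \<Longrightarrow> c \<in> {1..a} \<Longrightarrow> pmod (a * k + c) a = c"
  unfolding pmod_def by (cases "c = a") (auto simp: add.commute)

lemma bij_betw_pmod_window:
  assumes "0 < a"
  shows "bij_betw (\<lambda>k. pmod (m + k) a) {..<a} {1..a}"
proof -
  have inj: "inj_on (\<lambda>k. pmod (m + k) a) {..<a}"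
  proof (rule inj_onI)
    fix x y assume "x \<in> {..<a}" "y \<in> {..<a}" "pmod (m + x) a = pmod (m + y) a"
    then have "[m + x = m + y] (mod a)" "x < a" "y < a"
      using pmod_eq_iff_mod_eq[OF assms] by (auto simp: cong_def)
    then show "x = y" by (metis cong_add_lcancel_nat cong_less_modulus_unique_nat)
  qed
  moreover have "(\<lambda>k. pmod (m + k) a) ` {..<a} \<subseteq> {1..a}"
    using pmod_in_range[OF assms] by auto
  moreover have "card ((\<lambda>k. pmod (m + k) a) ` {..<a}) = card {1..a}"
    using card_image[OF inj] by simp
  ultimately show ?thesis
    by (simp add: bij_betw_def card_subset_eq)
qed

lemma sum_pmod_window:
  "0 < a \<Longrightarrow> (\<Sum>k<a. f (pmod (m + k) a)) = (\<Sum>v=1..a. f v)"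
  using sum.reindex_bij_betw[OF bij_betw_pmod_window] by simp

lemma card_pmod_window_le:
  assumes "0 < a"
  shows "card {k. k < a \<and> pmod (m + k) a \<le> r} \<le> r"
proof -
  have "card {k. k < a \<and> pmod (m + k) a \<le> r} \<le> card {1..r}"
  proof (rule card_inj_on_le)
    show "inj_on (\<lambda>k. pmod (m + k) a) {k. k < a \<and> pmod (m + k) a \<le> r}"
      using bij_betw_imp_inj_on[OF bij_betw_pmod_window[OF assms]]
      by (rule inj_on_subset) auto
    show "(\<lambda>k. pmod (m + k) a) ` {k. k < a \<and> pmod (m + k) a \<le> r} \<subseteq> {1..r}"
      using pmod_in_range[OF assms] by auto
  qed simp
  then show ?thesis by simp
qed

lemma ceiling_divide_nat:
  fixes b p :: nat
  assumes "0 < b" "0 < p"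
  shows "\<lceil>real p / real b\<rceil> = int ((p - 1) div b) + 1"
proof (rule ceiling_unique)
  have "p = b * ((p - 1) div b) + Suc ((p - 1) mod b)"
    using assms(2) div_mult_mod_eq[of "p - 1" b] by (simp add: mult.commute)
  then have "real p = real b * real ((p - 1) div b) + real (Suc ((p - 1) mod b))"
    by (metis of_nat_add of_nat_mult)
  moreover have "Suc ((p - 1) mod b) \<le> b" using assms(1) by (simp add: Suc_leI)
  ultimately show "of_int (int ((p - 1) div b) + 1) - 1 < real p / real b"
    "real p / real b \<le> of_int (int ((p - 1) div b) + 1)"
    using assms(1) by (auto simp: field_simps)
qed

lemma scheme_parameters:
  fixes \<alpha> \<beta> p :: nat
  assumes "0 < \<beta>" "0 < p" "p < \<alpha> * \<beta>"
  defines "q \<equiv> nat \<lceil>real p / real \<beta>\<rceil>" and "r \<equiv> pmod p \<beta>"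
  shows "1 \<le> q" "q \<le> \<alpha>" "1 \<le> r" "r \<le> \<beta>" "(q - 1) * \<beta> + r = p"
proof -
  have q: "q = Suc ((p - 1) div \<beta>)"
    unfolding q_def using ceiling_divide_nat[OF assms(1,2)] by simp
  have r: "r = Suc ((p - 1) mod \<beta>)"
    unfolding r_def using pmod_Suc[OF assms(1), of "p - 1"] assms(2) by simp
  show "1 \<le> q" using q by simp
  show "q \<le> \<alpha>" using q assms(3) by (simp add: Suc_le_eq less_mult_imp_div_less)
  show "1 \<le> r" "r \<le> \<beta>" using r assms(1) by (auto intro: Suc_leI)
  show "(q - 1) * \<beta> + r = p" using q r assms(2) by simp
qed

definition step_weight :: "nat \<Rightarrow> 'a \<Rightarrow> 'a \<Rightarrow> nat \<Rightarrow> 'a::zero" where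
  "step_weight q x y v = (if v < q then x else if v = q then y else 0)"

lemma sum_step_weight:
  fixes x y :: "'a::comm_semiring_1"
  assumes "1 \<le> q" "q \<le> a"
  shows "(\<Sum>v=1..a. step_weight q x y v) = of_nat (q - 1) * x + y"
proof -
  let ?w = "step_weight q x y"
  have "{1..a} = insert q ({1..<q} \<union> {q<..a})" using assms by auto
  moreover have "sum ?w ({1..<q} \<union> {q<..a}) = sum ?w {1..<q} + sum ?w {q<..a}"
    by (rule sum.union_disjoint) auto
  ultimately have "(\<Sum>v=1..a. ?w v) = ?w q + sum ?w {1..<q} + sum ?w {q<..a}"
    by (simp add: ac_simps)
  also have "\<dots> = of_nat (q - 1) * x + y"
    by (simp add: step_weight_def add.commute)
  finally show ?thesis .
qed

definition subset_enum :: "'a set \<Rightarrow> nat \<Rightarrow> 'a set" where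
  "subset_enum S = (SOME g. bij_betw g {1..2 ^ card S} (Pow S))"

lemma bij_betw_subset_enum:
  assumes "finite S"
  shows "bij_betw (subset_enum S) {1..2 ^ card S} (Pow S)"
proof -
  have "\<exists>g. bij_betw g {1..(2::nat) ^ card S} (Pow S)"
    using assms by (subst bij_betw_iff_card) (auto simp: card_Pow)
  then show ?thesis unfolding subset_enum_def by (rule someI_ex)
qed

definition write_subset :: "'a set \<Rightarrow> nat \<Rightarrow> ('a \<Rightarrow> bool) \<Rightarrow> ('a \<Rightarrow> bool)" where
  "write_subset S m u = (\<lambda>j. if j \<in> S then j \<in> subset_enum S m else u j)"

definition read_subset :: "'a set \<Rightarrow> ('a \<Rightarrow> bool) \<Rightarrow> nat" where
  "read_subset S v = inv_into {1..2 ^ card S} (subset_enum S) {j \<in> S. v j}"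

lemma read_write_subset:
  assumes "finite S" "m \<in> {1..2 ^ card S}"
  shows "read_subset S (write_subset S m u) = m"
proof -
  note enum = bij_betw_subset_enum[OF assms(1)]
  then have "subset_enum S m \<subseteq> S" using assms(2) bij_betwE by blast
  then have "{j \<in> S. write_subset S m u j} = subset_enum S m"
    unfolding write_subset_def by auto
  then show ?thesis
    unfolding read_subset_def using enum assms(2) by (simp add: bij_betw_def inv_into_f_f)
qed

lemma read_subset_in_range:
  assumes "finite S"
  shows "read_subset S v \<in> {1..2 ^ card S}"
proof -
  have "{j \<in> S. v j} \<in> subset_enum S ` {1..2 ^ card S}"
    using bij_betw_subset_enum[OF assms] by (auto simp: bij_betw_def)
  then show ?thesis unfolding read_subset_def by (rule inv_into_into)
qed

lemma nmsgs_eq_power: "real n * R = real k \<Longrightarrow> nmsgs n R = 2 ^ k"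
  unfolding nmsgs_def by (simp add: powr_realpow)

lemma is_code_write_subset:
  assumes "\<And>i. S i \<subseteq> {1..n}"
  shows "is_code n (\<lambda>i. real (card (S i)) / real n)
           (\<lambda>i. write_subset (S i)) (\<lambda>i. read_subset (S i))"
  unfolding is_code_def
proof (intro allI impI conjI ballI)
  fix i
  have fin: "finite (S i)" using assms finite_subset by blast
  have "card (S i) \<le> n" using card_mono[OF _ assms] by fastforce
  then have nm: "nmsgs n (real (card (S i)) / real n) = 2 ^ card (S i)"
    by (intro nmsgs_eq_power) (cases "n = 0"; simp)
  show "0 \<le> real (card (S i)) / real n" by simp
  show "read_subset (S i) v \<in> {1..nmsgs n (real (card (S i)) / real n)}" for v
    unfolding nm by (rule read_subset_in_range[OF fin])
  fix m u assume "m \<in> {1..nmsgs n (real (card (S i)) / real n)}" "u \<in> cellvecs n"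
  then show "write_subset (S i) m u \<in> cellvecs n"
    "read_subset (S i) (write_subset (S i) m u) = m"
    using assms[of i] read_write_subset[OF fin] nm
    by (auto simp: cellvecs_def write_subset_def)
qed

definition block_prefix_cells :: "nat \<Rightarrow> nat \<Rightarrow> nat \<Rightarrow> nat set" where
  "block_prefix_cells \<beta> n r = (\<lambda>(a, c). \<beta> * a + c) ` ({..<n div \<beta>} \<times> {1..r})"

lemma block_prefix_cells_subset:
  assumes "r \<le> \<beta>"
  shows "block_prefix_cells \<beta> n r \<subseteq> {1..n}"
proof
  fix j assume "j \<in> block_prefix_cells \<beta> n r"
  then obtain a c where j: "j = \<beta> * a + c" "Suc a \<le> n div \<beta>" "1 \<le> c" "c \<le> r"
    unfolding block_prefix_cells_def by auto
  have "j \<le> \<beta> * Suc a" using j assms by simp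
  also have "\<dots> \<le> \<beta> * (n div \<beta>)" using j(2) by (rule mult_le_mono2)
  also have "\<dots> \<le> n" by simp
  finally show "j \<in> {1..n}" using j by simp
qed

lemma pmod_le_of_mem_block_prefix_cells:
  assumes "0 < \<beta>" "r \<le> \<beta>" "j \<in> block_prefix_cells \<beta> n r"
  shows "pmod j \<beta> \<le> r"
  using assms pmod_mult_add unfolding block_prefix_cells_def by auto

lemma card_block_prefix_cells:
  assumes "0 < \<beta>" "r \<le> \<beta>"
  shows "card (block_prefix_cells \<beta> n r) = n div \<beta> * r"
proof -
  have "inj_on (\<lambda>(a, c). \<beta> * a + c) ({..<n div \<beta>} \<times> {1..r})"
  proof (rule inj_onI, clarify)
    fix a c a' c' assume c: "c \<in> {1..r}" "c' \<in> {1..r}" and eq: "\<beta> * a + c = \<beta> * a' + c'"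
    have "c = c'"
      using pmod_mult_add[OF assms(1), of c a] pmod_mult_add[OF assms(1), of c' a'] c assms(2) eq
      by auto
    then show "a = a' \<and> c = c'" using eq assms(1) by simp
  qed
  then show ?thesis
    unfolding block_prefix_cells_def by (simp add: card_image card_cartesian_product)
qed

lemma states_in_cellvecs:
  assumes "is_code n R E D" "valid_msgs n R ms"
  shows "states E ms k \<in> cellvecs n"
proof (induction k)
  case 0
  then show ?case by (simp add: zero_state_def cellvecs_def)
next
  case (Suc k)
  then show ?case using assms unfolding is_code_def valid_msgs_def by simp
qed

lemma scheme_code_exists:
  fixes \<alpha> \<beta> p n :: nat
  assumes "0 < \<beta>" "0 < p" "p < \<alpha> * \<beta>" "0 < n" "\<beta> dvd n"
  shows "\<exists>R E D. is_code n R E D \<and> follows_scheme \<alpha> \<beta> p n R E"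
proof -
  define q where "q = nat \<lceil>real p / real \<beta>\<rceil>"
  define r where "r = pmod p \<beta>"
  have r: "1 \<le> r" "r \<le> \<beta>"
    using scheme_parameters[OF assms(1-3)] unfolding r_def by auto
  define S where "S i = (if pmod i \<alpha> < q then {1..n}
      else if pmod i \<alpha> = q then block_prefix_cells \<beta> n r else {})" for i
  define R where "R i = real (card (S i)) / real n" for i
  have S_sub: "S i \<subseteq> {1..n}" for i
    unfolding S_def using block_prefix_cells_subset[OF r(2)] by auto
  obtain k where "n = \<beta> * k" using assms(5) by (rule dvdE)
  then have "real (n div \<beta> * r) / real n = real r / real \<beta>"
    using assms(1,4) by simp
  then have R: "R i = step_weight q 1 (real r / real \<beta>) (pmod i \<alpha>)" for i
    unfolding R_def S_def step_weight_def using card_block_prefix_cells[OF assms(1) r(2)] assms(4)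
    by auto
  have "follows_scheme \<alpha> \<beta> p n R (\<lambda>i. write_subset (S i))"
    unfolding follows_scheme_def Let_def q_def[symmetric] r_def[symmetric]
  proof (intro allI impI conjI ballI)
    fix i j m and u :: "nat \<Rightarrow> bool"
    show "pmod i \<alpha> < q \<Longrightarrow> R i = 1" "pmod i \<alpha> = q \<Longrightarrow> R i = real r / real \<beta>"
      "q < pmod i \<alpha> \<Longrightarrow> R i = 0"
      unfolding R step_weight_def by simp_all
    show "q < pmod i \<alpha> \<Longrightarrow> write_subset (S i) m u = u"
      unfolding S_def write_subset_def by simp
    assume "pmod i \<alpha> = q" "\<not> (1 \<le> pmod j \<beta> \<and> pmod j \<beta> \<le> r)"
    then show "write_subset (S i) m u j = u j"
      unfolding S_def write_subset_def
      using pmod_le_of_mem_block_prefix_cells[OF assms(1) r(2)] pmod_in_range[OF assms(1)]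
      by auto
  qed
  moreover have "is_code n R (\<lambda>i. write_subset (S i)) (\<lambda>i. read_subset (S i))"
    unfolding R_def by (rule is_code_write_subset[OF S_sub])
  ultimately show ?thesis by blast
qed

lemma card_changed_cells_le:
  fixes \<alpha> \<beta> p n :: nat
  assumes "0 < \<beta>" "is_code n R E D" "follows_scheme \<alpha> \<beta> p n R E" "valid_msgs n R ms"
    and "1 \<le> j" "j + \<beta> \<le> n + 1"
  defines "q \<equiv> nat \<lceil>real p / real \<beta>\<rceil>" and "r \<equiv> pmod p \<beta>"
  shows "card {l. l < \<beta> \<and> states E ms t (j + l) \<noteq> states E ms (Suc t) (j + l)}
           \<le> step_weight q \<beta> r (pmod (Suc t) \<alpha>)"
proof -
  define u where "u = states E ms t"
  let ?changed = "{l. l < \<beta> \<and> u (j + l) \<noteq> E (Suc t) (ms (Suc t)) u (j + l)}"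
  have u: "u \<in> cellvecs n" unfolding u_def by (rule states_in_cellvecs[OF assms(2,4)])
  have m: "ms (Suc t) \<in> {1..nmsgs n (R (Suc t))}" using assms(4) by (simp add: valid_msgs_def)
  have scheme: "\<forall>i\<ge>1.
        (pmod i \<alpha> = q \<longrightarrow> (\<forall>m \<in> {1..nmsgs n (R i)}. \<forall>u \<in> cellvecs n. \<forall>j \<in> {1..n}.
               \<not> (1 \<le> pmod j \<beta> \<and> pmod j \<beta> \<le> r) \<longrightarrow> E i m u j = u j)) \<and>
        (pmod i \<alpha> > q \<longrightarrow> (\<forall>m \<in> {1..nmsgs n (R i)}. \<forall>u \<in> cellvecs n. E i m u = u))"
    using assms(3) unfolding follows_scheme_def Let_def q_def r_def by simp
  consider "pmod (Suc t) \<alpha> < q" | "pmod (Suc t) \<alpha> = q" | "q < pmod (Suc t) \<alpha>" by linarith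
  then have "card ?changed \<le> step_weight q \<beta> r (pmod (Suc t) \<alpha>)"
  proof cases
    case 1
    have "card ?changed \<le> card {..<\<beta>}" by (rule card_mono) auto
    then show ?thesis using 1 by (simp add: step_weight_def)
  next
    case 2
    have "?changed \<subseteq> {l. l < \<beta> \<and> pmod (j + l) \<beta> \<le> r}"
      using scheme 2 m u assms(5,6) pmod_in_range[OF assms(1)] by fastforce
    then have "card ?changed \<le> card {l. l < \<beta> \<and> pmod (j + l) \<beta> \<le> r}"
      by (rule card_mono[rotated]) simp
    also have "\<dots> \<le> r" by (rule card_pmod_window_le[OF assms(1)])
    finally show ?thesis using 2 by (simp add: step_weight_def)
  next
    case 3
    then have "?changed = {}" using scheme m u by auto
    then show ?thesis by (metis card.empty le0)
  qed
  then show ?thesis by (simp add: u_def)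
qed

lemma scheme_constrained:
  fixes \<alpha> \<beta> p n :: nat
  assumes "0 < \<alpha>" "0 < \<beta>" "0 < p" "p < \<alpha> * \<beta>"
    and "is_code n R E D" "follows_scheme \<alpha> \<beta> p n R E"
  shows "constrained \<alpha> \<beta> p n R E"
  unfolding constrained_def
proof (intro allI impI)
  fix ms i j assume ms: "valid_msgs n R ms" and j: "1 \<le> j \<and> j + \<beta> \<le> n + 1"
  define q where "q = nat \<lceil>real p / real \<beta>\<rceil>"
  define r where "r = pmod p \<beta>"
  note qr = scheme_parameters[OF assms(2-4), folded q_def r_def]
  let ?changed = "\<lambda>k. {l. l < \<beta> \<and> states E ms (i + k) (j + l) \<noteq> states E ms (Suc (i + k)) (j + l)}"
  have "{(k, l). k < \<alpha> \<and> l < \<beta> \<and> states E ms (i + k) (j + l) \<noteq> states E ms (i + k + 1) (j + l)}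
      = Sigma {..<\<alpha>} ?changed" by auto
  then have "card {(k, l). k < \<alpha> \<and> l < \<beta> \<and> states E ms (i + k) (j + l) \<noteq> states E ms (i + k + 1) (j + l)}
      = (\<Sum>k<\<alpha>. card (?changed k))" by (simp add: card_SigmaI)
  also have "\<dots> \<le> (\<Sum>k<\<alpha>. step_weight q \<beta> r (pmod (Suc i + k) \<alpha>))"
    using card_changed_cells_le[OF assms(2,5,6) ms, folded q_def r_def] j by (intro sum_mono) simp
  also have "\<dots> = (\<Sum>v=1..\<alpha>. step_weight q \<beta> r v)" by (rule sum_pmod_window[OF assms(1)])
  also have "\<dots> = p" using sum_step_weight[OF qr(1,2), of \<beta> r] qr(5) by simp
  finally show "card {(k, l). k < \<alpha> \<and> l < \<beta> \<and> states E ms (i + k) (j + l) \<noteq> states E ms (i + k + 1) (j + l)} \<le> p" .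
qed

lemma has_rate_of_window_sums:
  fixes R :: "nat \<Rightarrow> real"
  assumes "0 < \<alpha>" and window: "\<And>m. (\<Sum>k<\<alpha>. R (Suc (m + k))) = P"
  shows "has_rate R (P / real \<alpha>)"
proof -
  define c where "c = P / real \<alpha>"
  define T where "T m = (\<Sum>k<m. R (Suc k))" for m
  have T_shift: "T (m + \<alpha>) = T m + P" for m
  proof -
    have "T (m + a) = T m + (\<Sum>k<a. R (Suc (m + k)))" for a
      unfolding T_def by (induction a) auto
    then show ?thesis using window by simp
  qed
  have T_periodic: "T (t * \<alpha> + s) = real t * P + T s" for t s
  proof (induction t)
    case (Suc t)
    have "T (Suc t * \<alpha> + s) = T ((t * \<alpha> + s) + \<alpha>)" by (simp add: algebra_simps)
    also have "\<dots> = T (t * \<alpha> + s) + P" by (rule T_shift)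
    also have "\<dots> = real (Suc t) * P + T s" using Suc by (simp add: algebra_simps)
    finally show ?case .
  qed simp
  define B where "B = (\<Sum>k<\<alpha>. \<bar>R (Suc k)\<bar>) + \<bar>P\<bar>"
  have T_deviation: "\<bar>T m - real m * c\<bar> \<le> B" for m
  proof -
    define s where "s = m mod \<alpha>"
    have s: "s < \<alpha>" unfolding s_def using assms(1) by simp
    have m: "m = m div \<alpha> * \<alpha> + s" unfolding s_def by simp
    have "T m - real m * c = T s - real s * c"
      using assms(1) by (subst (1 2) m, unfold T_periodic c_def) (simp add: field_simps)
    also have "\<bar>\<dots>\<bar> \<le> \<bar>T s\<bar> + real s * \<bar>c\<bar>"
      using abs_triangle_ineq4[of "T s" "real s * c"] by (simp add: abs_mult)
    also have "\<bar>T s\<bar> \<le> (\<Sum>k<\<alpha>. \<bar>R (Suc k)\<bar>)"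
      unfolding T_def using s by (intro order_trans[OF sum_abs] sum_mono2) auto
    also have "real s * \<bar>c\<bar> \<le> \<bar>P\<bar>"
      using s assms(1) by (simp add: c_def abs_divide field_simps mult_left_mono)
    finally show ?thesis unfolding B_def by simp
  qed
  have "(\<lambda>m. T m / real m - c) \<longlonglongrightarrow> 0"
  proof (rule tendsto_0_le[OF lim_inverse_n', where K = B])
    show "\<forall>\<^sub>F m in sequentially. norm (T m / real m - c) \<le> norm (1 / real m) * B"
      using eventually_gt_at_top[of 0]
    proof eventually_elim
      case (elim m)
      have "T m / real m - c = (T m - real m * c) / real m" using elim by (simp add: field_simps)
      then show ?case using T_deviation[of m] by (simp add: abs_divide divide_right_mono)
    qed
  qed
  then show ?thesis
    unfolding has_rate_def c_def[symmetric] LIM_zero_iff T_def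
    by (simp add: sum.atLeast1_atMost_eq)
qed

lemma scheme_has_rate:
  fixes \<alpha> \<beta> p n :: nat
  assumes "0 < \<alpha>" "0 < \<beta>" "0 < p" "p < \<alpha> * \<beta>" "follows_scheme \<alpha> \<beta> p n R E"
  shows "has_rate R (real p / real (\<alpha> * \<beta>))"
proof -
  define q where "q = nat \<lceil>real p / real \<beta>\<rceil>"
  define r where "r = pmod p \<beta>"
  note qr = scheme_parameters[OF assms(2-4), folded q_def r_def]
  have R: "R i = step_weight q 1 (real r / real \<beta>) (pmod i \<alpha>)" if "1 \<le> i" for i
    using assms(5) that unfolding follows_scheme_def Let_def q_def[symmetric] r_def[symmetric] step_weight_def
    by auto
  have "(\<Sum>k<\<alpha>. R (Suc (m + k))) = real p / real \<beta>" for m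
  proof -
    have "(\<Sum>k<\<alpha>. R (Suc (m + k))) = (\<Sum>k<\<alpha>. step_weight q 1 (real r / real \<beta>) (pmod (Suc m + k) \<alpha>))"
      using R by simp
    also have "\<dots> = (\<Sum>v=1..\<alpha>. step_weight q 1 (real r / real \<beta>) v)"
      by (rule sum_pmod_window[OF assms(1)])
    also have "\<dots> = real (q - 1) + real r / real \<beta>"
      using sum_step_weight[OF qr(1,2), of "1::real"] by simp
    also have "\<dots> = real ((q - 1) * \<beta> + r) / real \<beta>"
      using assms(2) by (simp add: field_simps)
    finally show ?thesis unfolding qr(5) .
  qed
  from has_rate_of_window_sums[OF assms(1) this] show ?thesis
    by (simp add: mult.commute)
qed

theorem theorem3:
  fixes \<alpha> \<beta> p n :: nat
  assumes "\<alpha> > 0" "\<beta> > 0" "p > 0" "n > 0" "p < \<alpha> * \<beta>" "\<beta> dvd n"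
  shows "(\<exists>R E D. is_code n R E D \<and> follows_scheme \<alpha> \<beta> p n R E)
       \<and> (\<forall>R E D. is_code n R E D \<and> follows_scheme \<alpha> \<beta> p n R E \<longrightarrow>
             constrained \<alpha> \<beta> p n R E \<and> has_rate R (real p / real (\<alpha> * \<beta>)))"
proof (intro conjI allI impI)
  show "\<exists>R E D. is_code n R E D \<and> follows_scheme \<alpha> \<beta> p n R E"
    using scheme_code_exists[OF assms(2,3,5,4,6)] .
  fix R E D assume code: "is_code n R E D \<and> follows_scheme \<alpha> \<beta> p n R E"
  then show "constrained \<alpha> \<beta> p n R E"
    using scheme_constrained[OF assms(1-3,5)] by blast
  show "has_rate R (real p / real (\<alpha> * \<beta>))"
    using code scheme_has_rate[OF assms(1-3,5)] by blast
qed

end
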